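(* Let $n\le m$ and let $\alpha_1,\ldots,\alpha_n\in\mathbb{R}^m$ be linearly independent unit vectors; let $H_i=\{y\in\mathbb{R}^m:(y,\alpha_i)=0\}$ and consider the polyhedral cone $Q=\{y\in\mathbb{R}^m : (y,\alpha_i)\geqslant 0 \text{ for all } i=1,\ldots,n\}$ with walls $B_i=H_i\cap Q$. Let $\lambda_{min}$ be the minimal eigenvalue of the (positive definite) Gram matrix $\big((\alpha_i,\alpha_j)\big)_{i,j=1}^n$. Then the number of reflections of any billiard trajectory in $Q$ does not exceed $n!\left(\frac{4}{\lambda_{min}}\right)^{n-1}$.
   Context: A billiard trajectory in $Q$: a point particle moves with uniform (constant-velocity) motion in the interior of $Q$ and undergoes specular reflections at the walls $B_i$, i.e. upon hitting $B_i$ its velocity $v$ is replaced by $v-2(v,\alpha_i)\alpha_i$. If the trajectory reaches a corner $B_i\cap B_j$ with $i\neq j$, its further motion is not defined. $(\cdot,\cdot)$ denotes the Euclidean inner product. *)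

theory Defs
  imports "HOL-Analysis.Analysis"
begin

definition cone_Q :: "(nat \<Rightarrow> 'a::euclidean_space) \<Rightarrow> nat \<Rightarrow> 'a set" where
  "cone_Q \<alpha> n = {y. \<forall>i<n. y \<bullet> \<alpha> i \<ge> 0}"

definition wall :: "(nat \<Rightarrow> 'a::euclidean_space) \<Rightarrow> nat \<Rightarrow> nat \<Rightarrow> 'a set" where
  "wall \<alpha> n i = {y. y \<bullet> \<alpha> i = 0} \<inter> cone_Q \<alpha> n"

definition gram_eigenvalues :: "(nat \<Rightarrow> 'a::euclidean_space) \<Rightarrow> nat \<Rightarrow> real set" where
  "gram_eigenvalues \<alpha> n =
     {\<mu>. \<exists>c::nat \<Rightarrow> real. (\<exists>i<n. c i \<noteq> 0) \<and>
          (\<forall>i<n. (\<Sum>j<n. (\<alpha> i \<bullet> \<alpha> j) * c j) = \<mu> * c i)}"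

definition lambda_min :: "(nat \<Rightarrow> 'a::euclidean_space) \<Rightarrow> nat \<Rightarrow> real" where
  "lambda_min \<alpha> n = Min (gram_eigenvalues \<alpha> n)"

text \<open>A billiard trajectory in Q with k reflections: start point p 0 in the interior of Q,
  reflection points p 1, ..., p k, velocities v 0, ..., v k (v j is the velocity after
  the j-th reflection). Between consecutive points the particle moves uniformly
  in the interior of Q; every reflection point lies on exactly one wall B_i (corners
  are excluded, since motion is undefined there) and the velocity is reflected
  specularly in that wall.\<close>
definition billiard_traj ::
  "(nat \<Rightarrow> 'a::euclidean_space) \<Rightarrow> nat \<Rightarrow> (nat \<Rightarrow> 'a) \<Rightarrow> (nat \<Rightarrow> 'a) \<Rightarrow> nat \<Rightarrow> bool" where
  "billiard_traj \<alpha> n p v k \<longleftrightarrow>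
     (\<forall>i<n. p 0 \<bullet> \<alpha> i > 0) \<and>
     (\<forall>j\<le>k. v j \<noteq> 0) \<and>
     (\<forall>j<k. \<exists>t>0. p (Suc j) = p j + t *\<^sub>R v j \<and>
              (\<forall>s. 0 < s \<and> s < t \<longrightarrow> (\<forall>i<n. (p j + s *\<^sub>R v j) \<bullet> \<alpha> i > 0))) \<and>
     (\<forall>j<k. \<exists>!i. i < n \<and> p (Suc j) \<in> wall \<alpha> n i) \<and>
     (\<forall>j<k. \<forall>i<n. p (Suc j) \<in> wall \<alpha> n i \<longrightarrow>
              v (Suc j) = v j - (2 * (v j \<bullet> \<alpha> i)) *\<^sub>R \<alpha> i)"

end

theory Submission
  imports Defs
begin

(*
  The least eigenvalue of the Gram matrix is the minimum of the Rayleigh quotient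
  |sum c_i alpha_i|^2 / |c|^2 (a minimiser is an eigenvector), so it bounds the Gram form from below.

  At every reflection the velocity V gains a positive multiple ("kick") of the normal of the wall
  hit, and |V| is preserved. Take a stretch of the trajectory that only hits the walls in a set S,
  and write V = z + w with w in span {alpha_i. i in S} and z orthogonal to it. Then z does not change,
  so w stays on a sphere of radius R. By the Gram bound, the total kick of the stretch is at most
  2 R sqrt (|S| / lambda), while at every moment some wall of S has coordinate at least
  R sqrt (lambda / |S|); that much kick is spent before this wall is hit, which by induction on |S|
  happens within F (|S| - 1) + 1 reflections. Counting such blocks gives
  F |S| = 4 |S| F (|S| - 1) / lambda and F 1 = 1, i.e. F s = s! (4 / lambda)^(s - 1).
*)

section \<open>The least eigenvalue of the Gram matrix\<close>

lemma quadratic_nonneg_imp_linear_coeff_zero: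
  fixes P M :: real
  assumes nonneg: "\<And>t. 0 \<le> t * P + t\<^sup>2 * M"
  shows "P = 0"
proof -
  define m where "m = \<bar>M\<bar> + 1"
  define t where "t = - P / m"
  have tm: "t * m = - P" by (simp add: t_def m_def add_pos_nonneg)
  have "0 \<le> m\<^sup>2 * (t * P + t\<^sup>2 * M)" using nonneg[of t] by simp
  also have "\<dots> \<le> m\<^sup>2 * (t * P + t\<^sup>2 * (m - 1))"
    unfolding m_def by (intro mult_left_mono add_left_mono) auto
  also have "\<dots> = m * (t * m) * P + (t * m)\<^sup>2 * (m - 1)"
    by (simp add: power2_eq_square algebra_simps)
  also have "\<dots> = - P\<^sup>2"
    unfolding tm by (simp add: power2_eq_square algebra_simps)
  finally show ?thesis by simp
qed

lemma independent_family_coeff_eq_0: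
  fixes \<alpha> :: "nat \<Rightarrow> 'a::real_vector"
  assumes inj: "inj_on \<alpha> {..<n}" and indep: "independent (\<alpha> ` {..<n})"
    and zero: "(\<Sum>i<n. c i *\<^sub>R \<alpha> i) = 0" and "i < n"
  shows "c i = 0"
proof -
  define u where "u v = c (the_inv_into {..<n} \<alpha> v)" for v
  have u_\<alpha>: "u (\<alpha> j) = c j" if "j < n" for j
    using that inj by (simp add: u_def the_inv_into_f_f)
  have "(\<Sum>v\<in>\<alpha> ` {..<n}. u v *\<^sub>R v) = (\<Sum>j<n. c j *\<^sub>R \<alpha> j)"
    using inj by (simp add: sum.reindex u_\<alpha>)
  then have "u (\<alpha> i) = 0"
    using independentD[OF indep, of "\<alpha> ` {..<n}" u] zero \<open>i < n\<close> by simp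
  then show ?thesis using u_\<alpha> \<open>i < n\<close> by simp
qed

lemma obtain_orthonormal_family:
  assumes "n \<le> DIM('a)"
  obtains b :: "nat \<Rightarrow> 'a::euclidean_space" where "\<And>i j. i < n \<Longrightarrow> j < n \<Longrightarrow> b i \<bullet> b j = (if i = j then 1 else 0)"
proof -
  obtain f where f: "f ` {..<n} \<subseteq> (Basis :: 'a set)" "inj_on f {..<n}"
    using card_le_inj[of "{..<n}" "Basis :: 'a set"] assms by auto
  show ?thesis
  proof (rule that[of f])
    fix i j assume "i < n" "j < n"
    then have "f i \<in> Basis" "f j \<in> Basis" "f i = f j \<longleftrightarrow> i = j"
      using f by (auto simp: inj_on_eq_iff)
    then show "f i \<bullet> f j = (if i = j then 1 else 0)"
      by (auto simp: inner_not_same_Basis)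
  qed
qed

context
  fixes b :: "nat \<Rightarrow> 'a::real_inner" and n :: nat
  assumes orthonormal: "\<And>i j. i < n \<Longrightarrow> j < n \<Longrightarrow> b i \<bullet> b j = (if i = j then 1 else 0)"
begin

lemma inner_sum_orthonormal: "j < n \<Longrightarrow> (\<Sum>i<n. c i *\<^sub>R b i) \<bullet> b j = c j"
  by (simp add: inner_sum_left orthonormal if_distrib cong: if_cong)

lemma inner_sum_sum_orthonormal:
  "(\<Sum>i<n. c i *\<^sub>R b i) \<bullet> (\<Sum>i<n. d i *\<^sub>R b i) = (\<Sum>i<n. c i * d i)"
  by (simp add: inner_sum_right inner_sum_orthonormal mult.commute)

lemma norm_sum_orthonormal: "(norm (\<Sum>i<n. c i *\<^sub>R b i))\<^sup>2 = (\<Sum>i<n. (c i)\<^sup>2)"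
  unfolding power2_norm_eq_inner by (simp add: inner_sum_sum_orthonormal power2_eq_square)

end

lemma rayleigh_bound_homogeneous:
  fixes \<alpha> :: "nat \<Rightarrow> 'a::real_normed_vector"
  assumes unit_bound: "\<And>d. (\<Sum>i<n. (d i)\<^sup>2) = 1 \<Longrightarrow> \<mu> \<le> (norm (\<Sum>i<n. d i *\<^sub>R \<alpha> i))\<^sup>2"
  shows "\<mu> * (\<Sum>i<n. (c i)\<^sup>2) \<le> (norm (\<Sum>i<n. c i *\<^sub>R \<alpha> i))\<^sup>2"
proof (cases "(\<Sum>i<n. (c i)\<^sup>2) = 0")
  case False
  have "0 \<le> (\<Sum>i<n. (c i)\<^sup>2)" by (simp add: sum_nonneg)
  then have sum_pos: "0 < (\<Sum>i<n. (c i)\<^sup>2)" using False by simp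
  define s where "s = sqrt (\<Sum>i<n. (c i)\<^sup>2)"
  have s_pos: "0 < s" and s2: "s\<^sup>2 = (\<Sum>i<n. (c i)\<^sup>2)"
    using sum_pos by (simp_all add: s_def)
  have "(\<Sum>i<n. (c i / s)\<^sup>2) = 1"
    using s2 sum_pos by (simp add: power_divide sum_divide_distrib[symmetric])
  then have "\<mu> \<le> (norm (\<Sum>i<n. (c i / s) *\<^sub>R \<alpha> i))\<^sup>2" by (rule unit_bound)
  also have "(\<Sum>i<n. (c i / s) *\<^sub>R \<alpha> i) = (1 / s) *\<^sub>R (\<Sum>i<n. c i *\<^sub>R \<alpha> i)"
    by (simp add: scaleR_sum_right)
  also have "(norm ((1 / s) *\<^sub>R (\<Sum>i<n. c i *\<^sub>R \<alpha> i)))\<^sup>2 = (norm (\<Sum>i<n. c i *\<^sub>R \<alpha> i))\<^sup>2 / s\<^sup>2"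
    using s_pos by (simp add: power_divide)
  finally show ?thesis using s2 sum_pos by (simp add: pos_le_divide_eq)
qed simp

text \<open>The coefficient vectors are realised in the span of an orthonormal family of \<open>'a\<close>,
  where the unit sphere is compact; this is what \<open>n \<le> DIM('a)\<close> is needed for.\<close>

lemma rayleigh_minimizer_exists:
  fixes \<alpha> :: "nat \<Rightarrow> 'a::euclidean_space"
  assumes dim: "n \<le> DIM('a)" and "0 < n"
  obtains c where "(\<Sum>i<n. (c i)\<^sup>2) = 1"
    and "\<And>d. (norm (\<Sum>i<n. c i *\<^sub>R \<alpha> i))\<^sup>2 * (\<Sum>i<n. (d i)\<^sup>2) \<le> (norm (\<Sum>i<n. d i *\<^sub>R \<alpha> i))\<^sup>2"
proof -
  obtain b :: "nat \<Rightarrow> 'a" where b: "\<And>i j. i < n \<Longrightarrow> j < n \<Longrightarrow> b i \<bullet> b j = (if i = j then 1 else 0)"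
    using obtain_orthonormal_family[OF dim] by blast
  define K where "K = cball (0::'a) 1 \<inter> {u. (\<Sum>i<n. (u \<bullet> b i)\<^sup>2) = 1}"
  define \<phi> where "\<phi> u = (norm (\<Sum>i<n. (u \<bullet> b i) *\<^sub>R \<alpha> i))\<^sup>2" for u
  have "closed {u::'a. (\<Sum>i<n. (u \<bullet> b i)\<^sup>2) = 1}"
    by (rule closed_Collect_eq) (auto intro!: continuous_intros)
  then have "compact K" unfolding K_def by (intro compact_Int_closed) auto
  moreover have "continuous_on K \<phi>" unfolding \<phi>_def by (auto intro!: continuous_intros)
  moreover have "b 0 \<in> K"
  proof -
    have "(\<Sum>i<n. (b 0 \<bullet> b i)\<^sup>2) = (\<Sum>i<n. if i = 0 then 1 else 0)"
      using \<open>0 < n\<close> by (intro sum.cong) (simp_all add: b)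
    moreover have "norm (b 0) = 1"
      using b[of 0 0] \<open>0 < n\<close> by (simp add: norm_eq_sqrt_inner)
    ultimately show ?thesis using \<open>0 < n\<close> by (simp add: K_def)
  qed
  ultimately obtain u0 where u0: "u0 \<in> K" and min: "\<And>u. u \<in> K \<Longrightarrow> \<phi> u0 \<le> \<phi> u"
    using continuous_attains_inf[of K \<phi>] by blast
  define c where "c i = u0 \<bullet> b i" for i
  have "(norm (\<Sum>i<n. c i *\<^sub>R \<alpha> i))\<^sup>2 \<le> (norm (\<Sum>i<n. d i *\<^sub>R \<alpha> i))\<^sup>2"
    if d_unit: "(\<Sum>i<n. (d i)\<^sup>2) = 1" for d
  proof -
    define u where "u = (\<Sum>i<n. d i *\<^sub>R b i)"
    have u_b: "u \<bullet> b j = d j" if "j < n" for j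
      using inner_sum_orthonormal[where b=b and n=n, OF b that] by (simp add: u_def)
    have "(norm u)\<^sup>2 = 1" using norm_sum_orthonormal[where b=b and n=n, OF b] d_unit by (simp add: u_def)
    then have "u \<in> K" using d_unit u_b by (auto simp: K_def power2_eq_1_iff)
    moreover have "(\<Sum>i<n. (u \<bullet> b i) *\<^sub>R \<alpha> i) = (\<Sum>i<n. d i *\<^sub>R \<alpha> i)"
      by (rule sum.cong) (simp_all add: u_b)
    ultimately show ?thesis using min by (fastforce simp: \<phi>_def c_def)
  qed
  moreover have "(\<Sum>i<n. (c i)\<^sup>2) = 1" using u0 by (simp add: K_def c_def)
  ultimately show ?thesis by (intro that rayleigh_bound_homogeneous) auto
qed

lemma gram_sum_eq_inner:
  fixes \<alpha> :: "nat \<Rightarrow> 'a::real_inner"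
  shows "(\<Sum>j<n. (\<alpha> i \<bullet> \<alpha> j) * c j) = \<alpha> i \<bullet> (\<Sum>j<n. c j *\<^sub>R \<alpha> j)"
  by (simp add: inner_sum_right mult.commute)

lemma rayleigh_minimizer_is_gram_eigenvector:
  fixes \<alpha> :: "nat \<Rightarrow> 'a::real_inner"
  assumes c_unit: "(\<Sum>i<n. (c i)\<^sup>2) = 1"
    and \<mu>: "\<mu> = (norm (\<Sum>i<n. c i *\<^sub>R \<alpha> i))\<^sup>2"
    and min: "\<And>d. \<mu> * (\<Sum>i<n. (d i)\<^sup>2) \<le> (norm (\<Sum>i<n. d i *\<^sub>R \<alpha> i))\<^sup>2"
    and "i < n"
  shows "(\<Sum>j<n. (\<alpha> i \<bullet> \<alpha> j) * c j) = \<mu> * c i"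
proof -
  define y where "y = (\<Sum>j<n. c j *\<^sub>R \<alpha> j)"
  define r where "r i = \<alpha> i \<bullet> y - \<mu> * c i" for i
  define Y where "Y = (\<Sum>j<n. r j *\<^sub>R \<alpha> j)"
  define P where "P = (\<Sum>i<n. (r i)\<^sup>2)"
  have "0 \<le> t * (2 * P) + t\<^sup>2 * ((norm Y)\<^sup>2 - \<mu> * P)" for t
  proof -
    have "(\<Sum>i<n. (c i + t * r i) *\<^sub>R \<alpha> i) = y + t *\<^sub>R Y"
      by (simp add: y_def Y_def scaleR_add_left sum.distrib scaleR_sum_right)
    moreover have "(norm (y + t *\<^sub>R Y))\<^sup>2 = (norm y)\<^sup>2 + 2 * t * (y \<bullet> Y) + t\<^sup>2 * (norm Y)\<^sup>2"
      unfolding power2_norm_eq_inner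
      by (simp add: inner_add_left inner_add_right inner_commute[of Y y] power2_eq_square algebra_simps)
    ultimately have "(norm (\<Sum>i<n. (c i + t * r i) *\<^sub>R \<alpha> i))\<^sup>2 = \<mu> + 2 * t * (y \<bullet> Y) + t\<^sup>2 * (norm Y)\<^sup>2"
      by (simp add: \<mu> y_def)
    moreover have "(\<Sum>i<n. (c i + t * r i)\<^sup>2) = 1 + 2 * t * (\<Sum>i<n. c i * r i) + t\<^sup>2 * P"
      using c_unit by (simp add: P_def power2_sum sum.distrib sum_distrib_left power_mult_distrib algebra_simps)
    moreover have "y \<bullet> Y - \<mu> * (\<Sum>i<n. c i * r i) = P"
      by (simp add: Y_def P_def r_def inner_sum_right inner_commute sum_distrib_left
          sum_subtractf[symmetric] power2_eq_square algebra_simps)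
    ultimately show ?thesis
      using min[of "\<lambda>i. c i + t * r i"] by (simp add: algebra_simps)
  qed
  then have "2 * P = 0" by (rule quadratic_nonneg_imp_linear_coeff_zero)
  then have "r i = 0"
    using \<open>i < n\<close> by (simp add: P_def sum_nonneg_eq_0_iff)
  then show ?thesis by (simp add: r_def y_def gram_sum_eq_inner)
qed

lemma inner_gram_eigenvector:
  fixes \<alpha> :: "nat \<Rightarrow> 'a::real_inner"
  assumes eigen: "\<forall>i<n. (\<Sum>j<n. (\<alpha> i \<bullet> \<alpha> j) * c j) = \<mu> * c i"
  shows "(\<Sum>i<n. d i *\<^sub>R \<alpha> i) \<bullet> (\<Sum>j<n. c j *\<^sub>R \<alpha> j) = \<mu> * (\<Sum>i<n. d i * c i)"
proof -
  have "(\<Sum>i<n. d i *\<^sub>R \<alpha> i) \<bullet> (\<Sum>j<n. c j *\<^sub>R \<alpha> j) = (\<Sum>i<n. d i * (\<mu> * c i))"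
    using eigen by (simp add: inner_sum_left gram_sum_eq_inner)
  then show ?thesis by (simp add: sum_distrib_left algebra_simps)
qed

lemma gram_eigenvectors_orthogonal:
  fixes \<alpha> :: "nat \<Rightarrow> 'a::real_inner"
  assumes "\<forall>i<n. (\<Sum>j<n. (\<alpha> i \<bullet> \<alpha> j) * c j) = \<mu> * c i"
    and "\<forall>i<n. (\<Sum>j<n. (\<alpha> i \<bullet> \<alpha> j) * d j) = \<nu> * d i"
    and "\<mu> \<noteq> \<nu>"
  shows "(\<Sum>i<n. d i * c i) = 0"
proof -
  have "\<mu> * (\<Sum>i<n. d i * c i) = \<nu> * (\<Sum>i<n. c i * d i)"
    using inner_gram_eigenvector[OF assms(1), of d] inner_gram_eigenvector[OF assms(2), of c]
    by (simp add: inner_commute)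
  then show ?thesis using assms(3) by (simp add: mult.commute)
qed

lemma finite_gram_eigenvalues:
  fixes \<alpha> :: "nat \<Rightarrow> 'a::euclidean_space"
  assumes dim: "n \<le> DIM('a)"
  shows "finite (gram_eigenvalues \<alpha> n)"
proof -
  obtain b :: "nat \<Rightarrow> 'a" where b: "\<And>i j. i < n \<Longrightarrow> j < n \<Longrightarrow> b i \<bullet> b j = (if i = j then 1 else 0)"
    using obtain_orthonormal_family[OF dim] by blast
  define E where "E = gram_eigenvalues \<alpha> n"
  have "\<forall>\<mu>\<in>E. \<exists>c. (\<exists>i<n. c i \<noteq> 0) \<and> (\<forall>i<n. (\<Sum>j<n. (\<alpha> i \<bullet> \<alpha> j) * c j) = \<mu> * c i)"
    by (simp add: E_def gram_eigenvalues_def)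
  from bchoice[OF this] obtain ev where ev: "\<forall>\<mu>\<in>E. (\<exists>i<n. ev \<mu> i \<noteq> 0) \<and>
      (\<forall>i<n. (\<Sum>j<n. (\<alpha> i \<bullet> \<alpha> j) * ev \<mu> j) = \<mu> * ev \<mu> i)"
    by blast
  then have ev_nonzero: "\<And>\<mu>. \<mu> \<in> E \<Longrightarrow> \<exists>i<n. ev \<mu> i \<noteq> 0"
    and ev_eigen: "\<And>\<mu>. \<mu> \<in> E \<Longrightarrow> \<forall>i<n. (\<Sum>j<n. (\<alpha> i \<bullet> \<alpha> j) * ev \<mu> j) = \<mu> * ev \<mu> i"
    by blast+
  define f where "f \<mu> = (\<Sum>i<n. ev \<mu> i *\<^sub>R b i)" for \<mu>
  have f_nonzero: "f \<mu> \<noteq> 0" if "\<mu> \<in> E" for \<mu>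
  proof
    assume "f \<mu> = 0"
    moreover have "(norm (f \<mu>))\<^sup>2 = (\<Sum>i<n. (ev \<mu> i)\<^sup>2)"
      unfolding f_def by (rule norm_sum_orthonormal[where b=b and n=n, OF b])
    ultimately have "(\<Sum>i<n. (ev \<mu> i)\<^sup>2) = 0" by simp
    then show False using ev_nonzero[OF that] by (auto simp: sum_nonneg_eq_0_iff)
  qed
  have f_orth: "f \<mu> \<bullet> f \<nu> = 0" if "\<mu> \<in> E" "\<nu> \<in> E" "\<mu> \<noteq> \<nu>" for \<mu> \<nu>
    using gram_eigenvectors_orthogonal[OF ev_eigen[OF that(2)] ev_eigen[OF that(1)]] that(3)
    by (simp add: f_def inner_sum_sum_orthonormal[where b=b and n=n, OF b])
  have "inj_on f E"
  proof (rule inj_onI)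
    fix \<mu> \<nu> assume "\<mu> \<in> E" "\<nu> \<in> E" "f \<mu> = f \<nu>"
    then show "\<mu> = \<nu>" using f_nonzero f_orth by force
  qed
  moreover have "independent (f ` E)"
    using f_nonzero f_orth
    by (intro pairwise_orthogonal_independent) (auto simp: pairwise_def orthogonal_def)
  ultimately show ?thesis
    using finiteI_independent finite_imageD by (auto simp: E_def)
qed

lemma gram_eigenvalue_pos:
  fixes \<alpha> :: "nat \<Rightarrow> 'a::euclidean_space"
  assumes "inj_on \<alpha> {..<n}" "independent (\<alpha> ` {..<n})"
    and "\<mu> \<in> gram_eigenvalues \<alpha> n"
  shows "0 < \<mu>"
proof -
  obtain c where c: "\<exists>i<n. c i \<noteq> 0" "\<forall>i<n. (\<Sum>j<n. (\<alpha> i \<bullet> \<alpha> j) * c j) = \<mu> * c i"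
    using assms(3) unfolding gram_eigenvalues_def by blast
  define y where "y = (\<Sum>j<n. c j *\<^sub>R \<alpha> j)"
  have "y \<noteq> 0"
    using independent_family_coeff_eq_0[OF assms(1,2)] c(1) by (auto simp: y_def)
  then have "0 < y \<bullet> y" by simp
  moreover have "y \<bullet> y = \<mu> * (\<Sum>i<n. (c i)\<^sup>2)"
    using inner_gram_eigenvector[OF c(2), of c] by (simp add: y_def power2_eq_square)
  moreover have "0 \<le> (\<Sum>i<n. (c i)\<^sup>2)" by (simp add: sum_nonneg)
  ultimately show ?thesis by (simp add: zero_less_mult_iff)
qed

lemma lambda_min_rayleigh:
  fixes \<alpha> :: "nat \<Rightarrow> 'a::euclidean_space"
  assumes dim: "n \<le> DIM('a)" and "0 < n"
  shows "lambda_min \<alpha> n \<in> gram_eigenvalues \<alpha> n"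
    and "lambda_min \<alpha> n * (\<Sum>i<n. (c i)\<^sup>2) \<le> (norm (\<Sum>i<n. c i *\<^sub>R \<alpha> i))\<^sup>2"
proof -
  obtain c0 where c0_unit: "(\<Sum>i<n. (c0 i)\<^sup>2) = 1"
    and min: "\<And>d. (norm (\<Sum>i<n. c0 i *\<^sub>R \<alpha> i))\<^sup>2 * (\<Sum>i<n. (d i)\<^sup>2) \<le> (norm (\<Sum>i<n. d i *\<^sub>R \<alpha> i))\<^sup>2"
    using rayleigh_minimizer_exists[OF assms] by blast
  define \<mu> where "\<mu> = (norm (\<Sum>i<n. c0 i *\<^sub>R \<alpha> i))\<^sup>2"
  have "\<exists>i<n. c0 i \<noteq> 0"
  proof (rule ccontr)
    assume "\<not> (\<exists>i<n. c0 i \<noteq> 0)"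
    then have "(\<Sum>i<n. (c0 i)\<^sup>2) = 0" by simp
    then show False using c0_unit by simp
  qed
  then have \<mu>_eigen: "\<mu> \<in> gram_eigenvalues \<alpha> n"
    using rayleigh_minimizer_is_gram_eigenvector[OF c0_unit \<mu>_def min[folded \<mu>_def]]
    by (auto simp: gram_eigenvalues_def)
  have fin: "finite (gram_eigenvalues \<alpha> n)" by (rule finite_gram_eigenvalues[OF dim])
  show "lambda_min \<alpha> n \<in> gram_eigenvalues \<alpha> n"
    unfolding lambda_min_def using fin \<mu>_eigen by (intro Min_in) auto
  have "lambda_min \<alpha> n \<le> \<mu>" unfolding lambda_min_def using fin \<mu>_eigen by simp
  then have "lambda_min \<alpha> n * (\<Sum>i<n. (c i)\<^sup>2) \<le> \<mu> * (\<Sum>i<n. (c i)\<^sup>2)"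
    by (intro mult_right_mono) (auto simp: sum_nonneg)
  also have "\<dots> \<le> (norm (\<Sum>i<n. c i *\<^sub>R \<alpha> i))\<^sup>2" using min[folded \<mu>_def] .
  finally show "lambda_min \<alpha> n * (\<Sum>i<n. (c i)\<^sup>2) \<le> (norm (\<Sum>i<n. c i *\<^sub>R \<alpha> i))\<^sup>2" .
qed

lemma lambda_min_pos:
  fixes \<alpha> :: "nat \<Rightarrow> 'a::euclidean_space"
  assumes "n \<le> DIM('a)" "0 < n" "inj_on \<alpha> {..<n}" "independent (\<alpha> ` {..<n})"
  shows "0 < lambda_min \<alpha> n"
  using gram_eigenvalue_pos[OF assms(3,4) lambda_min_rayleigh(1)[OF assms(1,2)]] .

lemma lambda_min_le_one:
  fixes \<alpha> :: "nat \<Rightarrow> 'a::euclidean_space"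
  assumes "n \<le> DIM('a)" "0 < n" and "norm (\<alpha> 0) = 1"
  shows "lambda_min \<alpha> n \<le> 1"
proof -
  define e :: "nat \<Rightarrow> real" where "e i = (if i = 0 then 1 else 0)" for i
  have "(e i)\<^sup>2 = (if i = 0 then 1 else 0)" "e i *\<^sub>R \<alpha> i = (if i = 0 then \<alpha> i else 0)" for i
    by (simp_all add: e_def)
  then have "(\<Sum>i<n. (e i)\<^sup>2) = 1" "(\<Sum>i<n. e i *\<^sub>R \<alpha> i) = \<alpha> 0"
    using \<open>0 < n\<close> by simp_all
  then show ?thesis using lambda_min_rayleigh(2)[OF assms(1,2), where \<alpha>=\<alpha> and c=e] assms(3) by simp
qed

section \<open>Sequences of reflections\<close>

lemma norm_reflect:
  fixes v a :: "'a::real_inner"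
  assumes "norm a = 1"
  shows "norm (v - (2 * (v \<bullet> a)) *\<^sub>R a) = norm v"
proof -
  have "a \<bullet> a = 1" using assms by (simp add: dot_square_norm)
  then have "(v - (2 * (v \<bullet> a)) *\<^sub>R a) \<bullet> (v - (2 * (v \<bullet> a)) *\<^sub>R a) = v \<bullet> v"
    by (simp add: inner_diff_left inner_diff_right inner_commute algebra_simps)
  then show ?thesis by (simp add: norm_eq_sqrt_inner)
qed

text \<open>\<open>V j\<close> is the velocity after the \<open>j\<close>-th reflection, which takes place at the wall \<open>\<iota> j\<close>
  (\<open>0 < j \<le> k\<close>).\<close>

locale reflection_seq =
  fixes \<alpha> :: "nat \<Rightarrow> 'a::euclidean_space" and n :: nat and lam :: real
    and V :: "nat \<Rightarrow> 'a" and \<iota> :: "nat \<Rightarrow> nat" and k :: nat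
  assumes unit: "\<And>i. i < n \<Longrightarrow> norm (\<alpha> i) = 1"
    and inj: "inj_on \<alpha> {..<n}"
    and lam_pos: "0 < lam" and lam_le_one: "lam \<le> 1"
    and rayleigh: "\<And>c. lam * (\<Sum>i<n. (c i)\<^sup>2) \<le> (norm (\<Sum>i<n. c i *\<^sub>R \<alpha> i))\<^sup>2"
    and wall_lt: "\<And>j. 0 < j \<Longrightarrow> j \<le> k \<Longrightarrow> \<iota> j < n"
    and approaching: "\<And>j. j < k \<Longrightarrow> V j \<bullet> \<alpha> (\<iota> (Suc j)) < 0"
    and reflect: "\<And>j. j < k \<Longrightarrow> V (Suc j) = V j - (2 * (V j \<bullet> \<alpha> (\<iota> (Suc j)))) *\<^sub>R \<alpha> (\<iota> (Suc j))"
begin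

definition kick :: "nat \<Rightarrow> real" where
  "kick j = - 2 * (V (j - 1) \<bullet> \<alpha> (\<iota> j))"

lemma kick_pos: "0 < j \<Longrightarrow> j \<le> k \<Longrightarrow> 0 < kick j"
  using approaching[of "j - 1"] by (simp add: kick_def)

lemma V_eq_add_kick: "0 < j \<Longrightarrow> j \<le> k \<Longrightarrow> V j = V (j - 1) + kick j *\<^sub>R \<alpha> (\<iota> j)"
  using reflect[of "j - 1"] by (simp add: kick_def)

lemma norm_V: "j \<le> k \<Longrightarrow> norm (V j) = norm (V 0)"
proof (induction j)
  case (Suc j)
  then show ?case using reflect[of j] norm_reflect[OF unit[OF wall_lt[of "Suc j"]]] by simp
qed simp

lemma inner_V_wall:
  assumes "0 < j" "j \<le> k"
  shows "V j \<bullet> \<alpha> (\<iota> j) = kick j / 2"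
proof -
  have "\<alpha> (\<iota> j) \<bullet> \<alpha> (\<iota> j) = 1" using unit[OF wall_lt[OF assms]] by (simp add: dot_square_norm)
  then show ?thesis using V_eq_add_kick[OF assms] by (simp add: inner_add_left inner_diff_left kick_def)
qed

lemma wall_Suc_neq: "0 < j \<Longrightarrow> j < k \<Longrightarrow> \<iota> (Suc j) \<noteq> \<iota> j"
  using inner_V_wall[of j] kick_pos[of j] approaching[of j] by force

lemma V_diff_eq_sum_kicks: "c \<le> m \<Longrightarrow> m \<le> k \<Longrightarrow> V m - V c = (\<Sum>j\<in>{c<..m}. kick j *\<^sub>R \<alpha> (\<iota> j))"
proof (induction m)
  case (Suc m)
  show ?case
  proof (cases "c = Suc m")
    case False
    then have "c \<le> m" using Suc.prems by simp
    moreover have "{c<..Suc m} = insert (Suc m) {c<..m}" using \<open>c \<le> m\<close> by auto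
    ultimately show ?thesis
      using Suc.IH Suc.prems V_eq_add_kick[of "Suc m"] by (simp add: algebra_simps)
  qed simp
qed simp

lemma abs_inner_V_diff_le:
  assumes "c \<le> m" "m \<le> k" "i < n"
  shows "\<bar>V m \<bullet> \<alpha> i - V c \<bullet> \<alpha> i\<bar> \<le> (\<Sum>j\<in>{c<..m}. kick j)"
proof -
  have "\<bar>V m \<bullet> \<alpha> i - V c \<bullet> \<alpha> i\<bar> = \<bar>\<Sum>j\<in>{c<..m}. kick j * (\<alpha> (\<iota> j) \<bullet> \<alpha> i)\<bar>"
    using V_diff_eq_sum_kicks[OF assms(1,2)] by (simp add: inner_diff_left[symmetric] inner_sum_left)
  also have "\<dots> \<le> (\<Sum>j\<in>{c<..m}. \<bar>kick j * (\<alpha> (\<iota> j) \<bullet> \<alpha> i)\<bar>)" by (rule sum_abs)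
  also have "\<dots> \<le> (\<Sum>j\<in>{c<..m}. kick j)"
  proof (rule sum_mono)
    fix j assume "j \<in> {c<..m}"
    then have j: "0 < j" "j \<le> k" using assms by auto
    have "\<bar>\<alpha> (\<iota> j) \<bullet> \<alpha> i\<bar> \<le> 1"
      using Cauchy_Schwarz_ineq2[of "\<alpha> (\<iota> j)" "\<alpha> i"] unit[OF wall_lt[OF j]] unit[OF assms(3)] by simp
    then show "\<bar>kick j * (\<alpha> (\<iota> j) \<bullet> \<alpha> i)\<bar> \<le> kick j"
      using kick_pos[OF j] by (simp add: abs_mult mult_left_le)
  qed
  finally show ?thesis .
qed

lemma abs_inner_V_le_sum_kicks:
  assumes "c < e" "e \<le> k"
  shows "\<bar>V c \<bullet> \<alpha> (\<iota> e)\<bar> \<le> (\<Sum>j\<in>{c<..e}. kick j)"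
proof -
  have e: "c \<le> e - 1" "Suc (e - 1) = e" using assms by auto
  have "V (e - 1) \<bullet> \<alpha> (\<iota> e) < 0" using approaching[of "e - 1"] e assms by simp
  moreover have "\<bar>V (e - 1) \<bullet> \<alpha> (\<iota> e) - V c \<bullet> \<alpha> (\<iota> e)\<bar> \<le> (\<Sum>j\<in>{c<..e - 1}. kick j)"
    using abs_inner_V_diff_le[OF e(1)] wall_lt[of e] assms by simp
  moreover have "{c<..e} = insert e {c<..e - 1}" using assms by auto
  then have "(\<Sum>j\<in>{c<..e}. kick j) = kick e + (\<Sum>j\<in>{c<..e - 1}. kick j)" using assms by simp
  ultimately show ?thesis by (simp add: kick_def)
qed

definition walls_within :: "nat set \<Rightarrow> nat \<Rightarrow> nat \<Rightarrow> bool" where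
  "walls_within S a b \<longleftrightarrow> a \<le> b \<and> b \<le> k \<and> (\<forall>j. a < j \<and> j \<le> b \<longrightarrow> \<iota> j \<in> S)"

lemma rayleigh_subset:
  assumes "S \<subseteq> {..<n}"
  shows "lam * (\<Sum>i\<in>S. (c i)\<^sup>2) \<le> (norm (\<Sum>i\<in>S. c i *\<^sub>R \<alpha> i))\<^sup>2"
proof -
  define c' where "c' i = (if i \<in> S then c i else 0)" for i
  have "(c' i)\<^sup>2 = (if i \<in> S then (c i)\<^sup>2 else 0)" "c' i *\<^sub>R \<alpha> i = (if i \<in> S then c i *\<^sub>R \<alpha> i else 0)" for i
    by (simp_all add: c'_def)
  moreover have "{..<n} \<inter> S = S" using assms by blast
  ultimately have "(\<Sum>i<n. (c' i)\<^sup>2) = (\<Sum>i\<in>S. (c i)\<^sup>2)" "(\<Sum>i<n. c' i *\<^sub>R \<alpha> i) = (\<Sum>i\<in>S. c i *\<^sub>R \<alpha> i)"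
    by (simp_all add: sum.inter_restrict[symmetric])
  then show ?thesis using rayleigh[of c'] by simp
qed

lemma rayleigh_span:
  assumes S: "S \<subseteq> {..<n}" and x: "x \<in> span (\<alpha> ` S)"
  shows "lam * (norm x)\<^sup>2 \<le> (\<Sum>i\<in>S. (x \<bullet> \<alpha> i)\<^sup>2)"
proof -
  have "finite S" "inj_on \<alpha> S" using S finite_subset inj inj_on_subset by blast+
  then obtain c where x_eq: "x = (\<Sum>i\<in>S. c i *\<^sub>R \<alpha> i)"
    using x by (auto simp: span_finite sum.reindex)
  define N where "N = (norm x)\<^sup>2"
  define C where "C = (\<Sum>i\<in>S. (c i)\<^sup>2)"
  define W where "W = (\<Sum>i\<in>S. (x \<bullet> \<alpha> i)\<^sup>2)"
  have "N = (\<Sum>i\<in>S. c i * (x \<bullet> \<alpha> i))"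
    unfolding N_def power2_norm_eq_inner by (subst (1) x_eq) (simp add: inner_sum_left inner_sum_right inner_commute)
  then have "N\<^sup>2 \<le> C * W" unfolding C_def W_def by (simp add: Cauchy_Schwarz_ineq_sum)
  moreover have "lam * C \<le> N" unfolding C_def N_def using rayleigh_subset[OF S, of c] x_eq by simp
  moreover have "0 \<le> W" "0 \<le> N" by (simp_all add: W_def N_def sum_nonneg)
  ultimately have "N * (lam * N) \<le> N * W"
    using lam_pos by (smt (verit) mult_right_mono mult_left_mono power2_eq_square mult.assoc mult.commute)
  then show "lam * (norm x)\<^sup>2 \<le> W"
    using \<open>0 \<le> W\<close> lam_pos by (cases "N = 0") (auto simp: N_def)
qed

lemma centre_exists:
  assumes "walls_within S a b"
  obtains z where "\<And>i. i \<in> S \<Longrightarrow> z \<bullet> \<alpha> i = 0"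
    and "\<And>c. a \<le> c \<Longrightarrow> c \<le> b \<Longrightarrow> V c - z \<in> span (\<alpha> ` S)"
proof -
  obtain y z where y: "y \<in> span (\<alpha> ` S)" and z: "\<And>w. w \<in> span (\<alpha> ` S) \<Longrightarrow> orthogonal z w"
    and V_a: "V a = y + z"
    using orthogonal_subspace_decomp_exists[of "\<alpha> ` S" "V a"] by blast
  show ?thesis
  proof
    show "z \<bullet> \<alpha> i = 0" if "i \<in> S" for i
      using z[of "\<alpha> i"] that by (simp add: orthogonal_def span_base)
    fix c assume c: "a \<le> c" "c \<le> b"
    have "(\<Sum>j\<in>{a<..c}. kick j *\<^sub>R \<alpha> (\<iota> j)) \<in> span (\<alpha> ` S)"
      using assms c by (intro span_sum span_mul span_base) (auto simp: walls_within_def)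
    moreover have "V c - z = y + (\<Sum>j\<in>{a<..c}. kick j *\<^sub>R \<alpha> (\<iota> j))"
      using V_diff_eq_sum_kicks[of a c] assms c V_a by (simp add: walls_within_def algebra_simps)
    ultimately show "V c - z \<in> span (\<alpha> ` S)" using y by (simp add: span_add)
  qed
qed

lemma walls_within_singleton:
  assumes "walls_within {i} a b"
  shows "b - a \<le> 1"
proof (rule ccontr)
  assume "\<not> b - a \<le> 1"
  then have "Suc (Suc a) \<le> b" by simp
  then show False using assms wall_Suc_neq[of "Suc a"] by (auto simp: walls_within_def)
qed

definition reflection_bound :: "nat \<Rightarrow> real" where
  "reflection_bound s = fact s * (4 / lam) ^ (s - 1)"

lemma reflection_bound_nonneg: "0 \<le> reflection_bound s"
  using lam_pos by (simp add: reflection_bound_def)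

lemma reflection_bound_1: "reflection_bound 1 = 1"
  by (simp add: reflection_bound_def)

lemma reflection_bound_2: "reflection_bound 2 = 8 / lam"
  by (simp add: reflection_bound_def numeral_2_eq_2)

lemma reflection_bound_rec:
  assumes "2 \<le> s"
  shows "reflection_bound s = 4 * real s / lam * reflection_bound (s - 1)"
proof -
  obtain t where "s = Suc (Suc t)" using assms by (metis add_2_eq_Suc le_Suc_ex)
  then show ?thesis by (simp add: reflection_bound_def)
qed

lemma two_le_reflection_bound: "2 \<le> s \<Longrightarrow> 2 \<le> reflection_bound s"
proof -
  assume "2 \<le> s"
  then have "(2::real) \<le> fact s" using fact_mono[of 2 s] by (simp add: numeral_2_eq_2)
  moreover have "1 \<le> (4 / lam) ^ (s - 1)"
    using lam_pos lam_le_one by (intro one_le_power) (simp add: pos_le_divide_eq)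
  ultimately show ?thesis
    unfolding reflection_bound_def using mult_mono[of "2::real" "fact s" 1 "(4 / lam) ^ (s - 1)"] by simp
qed

end

lemma greedy_block_bound:
  fixes w :: "nat \<Rightarrow> real" and a b :: nat and d L :: real
  assumes w_nonneg: "\<And>j. a < j \<Longrightarrow> j \<le> b \<Longrightarrow> 0 \<le> w j"
    and d_pos: "0 < d" and L_nonneg: "0 \<le> L"
    and block: "\<And>c. a \<le> c \<Longrightarrow> c \<le> b \<Longrightarrow> real (b - c) \<le> L \<or>
        (\<exists>e>c. e \<le> b \<and> real (e - c) \<le> L + 1 \<and> d \<le> (\<Sum>j\<in>{c<..e}. w j))"
  shows "real (b - a) \<le> (L + 1) * (\<Sum>j\<in>{a<..b}. w j) / d + L"
proof -
  have "real (b - c) \<le> (L + 1) * (\<Sum>j\<in>{c<..b}. w j) / d + L" if "a \<le> c" "c \<le> b" for c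
    using that
  proof (induction "b - c" arbitrary: c rule: less_induct)
    case less
    have "0 \<le> (\<Sum>j\<in>{c<..b}. w j)"
      using less.prems w_nonneg by (intro sum_nonneg) auto
    then have tail_nonneg: "0 \<le> (L + 1) * (\<Sum>j\<in>{c<..b}. w j) / d"
      using L_nonneg d_pos by simp
    from block[OF less.prems] show ?case
    proof
      assume "real (b - c) \<le> L"
      then show ?thesis using tail_nonneg by linarith
    next
      assume "\<exists>e>c. e \<le> b \<and> real (e - c) \<le> L + 1 \<and> d \<le> (\<Sum>j\<in>{c<..e}. w j)"
      then obtain e where e: "c < e" "e \<le> b" "real (e - c) \<le> L + 1" "d \<le> (\<Sum>j\<in>{c<..e}. w j)"
        by blast
      have IH: "real (b - e) \<le> (L + 1) * (\<Sum>j\<in>{e<..b}. w j) / d + L"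
        using less.hyps[of e] e less.prems by auto
      have "{c<..b} = {c<..e} \<union> {e<..b}" using e by auto
      then have split: "(\<Sum>j\<in>{c<..b}. w j) = (\<Sum>j\<in>{c<..e}. w j) + (\<Sum>j\<in>{e<..b}. w j)"
        by (simp add: sum.union_disjoint ivl_disj_int)
      have "(L + 1) * d \<le> (L + 1) * (\<Sum>j\<in>{c<..e}. w j)"
        using e(4) L_nonneg by (intro mult_left_mono) auto
      then have "L + 1 \<le> (L + 1) * (\<Sum>j\<in>{c<..e}. w j) / d"
        using d_pos by (simp add: pos_le_divide_eq)
      moreover have "real (b - c) = real (e - c) + real (b - e)" using e by auto
      ultimately show ?thesis
        using IH e(3) by (simp add: split distrib_left add_divide_distrib)
    qed
  qed
  then show ?thesis
    using block[of a] L_nonneg by (cases "a \<le> b") auto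
qed

text \<open>\<open>z\<close> is the component of the velocity orthogonal to the walls in \<open>S\<close>; reflections in
  these walls do not change it.\<close>

locale reflection_stretch = reflection_seq +
  fixes S :: "nat set" and a b :: nat and z :: 'a
  assumes S_sub: "S \<subseteq> {..<n}" and walls: "walls_within S a b"
    and z_orth: "\<And>i. i \<in> S \<Longrightarrow> z \<bullet> \<alpha> i = 0"
    and V_minus_z_in_span: "\<And>c. a \<le> c \<Longrightarrow> c \<le> b \<Longrightarrow> V c - z \<in> span (\<alpha> ` S)"
begin

definition radius :: real where
  "radius = norm (V a - z)"

lemma a_le_b: "a \<le> b" and b_le_k: "b \<le> k" and wall_in_S: "a < j \<Longrightarrow> j \<le> b \<Longrightarrow> \<iota> j \<in> S"
  using walls by (auto simp: walls_within_def)

lemma kick_nonneg: "a < j \<Longrightarrow> j \<le> b \<Longrightarrow> 0 \<le> kick j"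
  using kick_pos[of j] b_le_k by simp

lemma finite_S: "finite S"
  using S_sub finite_subset by blast

lemma inner_V_minus_z: "i \<in> S \<Longrightarrow> (V c - z) \<bullet> \<alpha> i = V c \<bullet> \<alpha> i"
  using z_orth by (simp add: inner_diff_left)

lemma norm_V_minus_z:
  assumes "a \<le> c" "c \<le> b"
  shows "norm (V c - z) = radius"
proof -
  have pythagoras: "(norm (V c))\<^sup>2 = (norm (V c - z))\<^sup>2 + (norm z)\<^sup>2" if "a \<le> c" "c \<le> b" for c
  proof -
    have "orthogonal z (V c - z)"
      by (rule orthogonal_to_span[OF V_minus_z_in_span[OF that]]) (auto simp: orthogonal_def z_orth)
    then show ?thesis
      using norm_add_Pythagorean[of "V c - z" z] by (simp add: orthogonal_commute)
  qed
  have "norm (V c) = norm (V a)" using norm_V[of c] norm_V[of a] assms b_le_k by simp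
  then have "(norm (V c - z))\<^sup>2 = radius\<^sup>2"
    using pythagoras[OF assms] pythagoras[of a] a_le_b by (simp add: radius_def)
  then show ?thesis by (simp add: radius_def power2_eq_iff_nonneg)
qed

lemma radius_pos:
  assumes "a < b"
  shows "0 < radius"
proof -
  have "(V a - z) \<bullet> \<alpha> (\<iota> (Suc a)) = V a \<bullet> \<alpha> (\<iota> (Suc a))"
    using wall_in_S[of "Suc a"] assms by (simp add: inner_V_minus_z)
  also have "\<dots> < 0" using approaching[of a] assms b_le_k by simp
  finally show ?thesis by (auto simp: radius_def)
qed

lemma sum_kicks_sq_le: "(\<Sum>j\<in>{a<..b}. kick j)\<^sup>2 \<le> 4 * radius\<^sup>2 * card S / lam"
proof -
  define \<beta> where "\<beta> i = (\<Sum>j | j \<in> {a<..b} \<and> \<iota> j = i. kick j)" for i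
  have walls_img: "\<iota> ` {a<..b} \<subseteq> S" using wall_in_S by auto
  have "V b - V a = (\<Sum>j\<in>{a<..b}. kick j *\<^sub>R \<alpha> (\<iota> j))"
    using V_diff_eq_sum_kicks a_le_b b_le_k by simp
  also have "\<dots> = (\<Sum>i\<in>S. \<Sum>j | j \<in> {a<..b} \<and> \<iota> j = i. kick j *\<^sub>R \<alpha> (\<iota> j))"
    using sum.group[OF _ finite_S walls_img, of "\<lambda>j. kick j *\<^sub>R \<alpha> (\<iota> j)"] by simp
  also have "\<dots> = (\<Sum>i\<in>S. \<beta> i *\<^sub>R \<alpha> i)"
    unfolding \<beta>_def scaleR_sum_left by (intro sum.cong refl) auto
  finally have "lam * (\<Sum>i\<in>S. (\<beta> i)\<^sup>2) \<le> (norm (V b - V a))\<^sup>2"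
    using rayleigh_subset[OF S_sub] by simp
  also have "\<dots> \<le> (2 * radius)\<^sup>2"
  proof -
    have "norm (V b - V a) \<le> norm (V b - z) + norm (V a - z)"
      using norm_triangle_ineq4[of "V b - z" "V a - z"] by simp
    then show ?thesis using norm_V_minus_z[of a] norm_V_minus_z[of b] a_le_b
      by (intro power_mono) auto
  qed
  finally have \<beta>_bound: "(\<Sum>i\<in>S. (\<beta> i)\<^sup>2) \<le> 4 * radius\<^sup>2 / lam"
    using lam_pos by (simp add: pos_le_divide_eq power_mult_distrib mult.commute)
  have "(\<Sum>j\<in>{a<..b}. kick j) = (\<Sum>i\<in>S. \<beta> i)"
    unfolding \<beta>_def using sum.group[OF _ finite_S walls_img, of kick] by simp
  then have "(\<Sum>j\<in>{a<..b}. kick j)\<^sup>2 \<le> card S * (\<Sum>i\<in>S. (\<beta> i)\<^sup>2)"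
    using Cauchy_Schwarz_ineq_sum[of "\<lambda>i. 1" \<beta> S] by simp
  also have "\<dots> \<le> card S * (4 * radius\<^sup>2 / lam)"
    using \<beta>_bound by (intro mult_left_mono) auto
  finally show ?thesis by (simp add: ac_simps)
qed

lemma exists_large_coordinate:
  assumes "S \<noteq> {}" "a \<le> c" "c \<le> b"
  shows "\<exists>i\<in>S. lam * radius\<^sup>2 / card S \<le> (V c \<bullet> \<alpha> i)\<^sup>2"
proof (rule ccontr)
  assume "\<not> ?thesis"
  then have "(\<Sum>i\<in>S. (V c \<bullet> \<alpha> i)\<^sup>2) < (\<Sum>i\<in>S. lam * radius\<^sup>2 / card S)"
    using finite_S assms(1) by (intro sum_strict_mono) auto
  also have "\<dots> = lam * (norm (V c - z))\<^sup>2"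
    using finite_S assms norm_V_minus_z by simp
  also have "\<dots> \<le> (\<Sum>i\<in>S. ((V c - z) \<bullet> \<alpha> i)\<^sup>2)"
    using rayleigh_span[OF S_sub V_minus_z_in_span[OF assms(2,3)]] .
  also have "\<dots> = (\<Sum>i\<in>S. (V c \<bullet> \<alpha> i)\<^sup>2)" by (simp add: inner_V_minus_z)
  finally show False by simp
qed

lemma two_kicks_lower_bound:
  assumes "card S = 2" "a \<le> c" "Suc (Suc c) \<le> b"
  shows "2 * sqrt lam * radius \<le> kick (Suc c) + kick (Suc (Suc c))"
proof -
  define i1 where "i1 = \<iota> (Suc c)"
  define i2 where "i2 = \<iota> (Suc (Suc c))"
  have "i1 \<noteq> i2" using wall_Suc_neq[of "Suc c"] assms b_le_k by (simp add: i1_def i2_def)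
  moreover have "i1 \<in> S" "i2 \<in> S" using wall_in_S assms by (auto simp: i1_def i2_def)
  ultimately have S_eq: "S = {i1, i2}"
    using assms(1) finite_S by (intro card_subset_eq[symmetric]) auto
  define y1 where "y1 = V (Suc c) \<bullet> \<alpha> i1"
  define y2 where "y2 = V (Suc c) \<bullet> \<alpha> i2"
  have y1: "kick (Suc c) = 2 * y1" using inner_V_wall[of "Suc c"] assms b_le_k by (simp add: y1_def i1_def)
  have y2: "kick (Suc (Suc c)) = - 2 * y2" by (simp add: kick_def y2_def i2_def)
  have "0 < y1" "0 < - y2" using kick_pos[of "Suc c"] kick_pos[of "Suc (Suc c)"] assms b_le_k y1 y2 by simp_all
  have "lam * radius\<^sup>2 \<le> (\<Sum>i\<in>S. ((V (Suc c) - z) \<bullet> \<alpha> i)\<^sup>2)"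
    using rayleigh_span[OF S_sub V_minus_z_in_span] norm_V_minus_z assms by simp
  also have "\<dots> = y1\<^sup>2 + y2\<^sup>2" using \<open>i1 \<noteq> i2\<close> by (simp add: S_eq inner_V_minus_z y1_def y2_def)
  also have "\<dots> \<le> (y1 - y2)\<^sup>2"
    using mult_pos_pos[OF \<open>0 < y1\<close> \<open>0 < - y2\<close>] by (simp add: power2_eq_square algebra_simps)
  also have "\<dots> = (kick (Suc c) + kick (Suc (Suc c)))\<^sup>2 / 4"
    by (simp add: y1 y2 power2_eq_square algebra_simps)
  finally have "(2 * sqrt lam * radius)\<^sup>2 \<le> (kick (Suc c) + kick (Suc (Suc c)))\<^sup>2"
    using lam_pos by (simp add: power_mult_distrib)
  then show ?thesis
    by (rule power2_le_imp_le) (use \<open>0 < y1\<close> \<open>0 < - y2\<close> y1 y2 in simp)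
qed

lemma short_tail_or_block:
  assumes "S \<noteq> {}" "a \<le> c" "c \<le> b"
    and shorter: "\<And>i c e. i \<in> S \<Longrightarrow> walls_within (S - {i}) c e \<Longrightarrow> real (e - c) \<le> L"
  shows "real (b - c) \<le> L \<or>
    (\<exists>e>c. e \<le> b \<and> real (e - c) \<le> L + 1 \<and> radius * sqrt (lam / card S) \<le> (\<Sum>j\<in>{c<..e}. kick j))"
proof -
  obtain i where "i \<in> S" and large: "lam * radius\<^sup>2 / card S \<le> (V c \<bullet> \<alpha> i)\<^sup>2"
    using exists_large_coordinate[OF assms(1-3)] by blast
  show ?thesis
  proof (cases "\<exists>e. c < e \<and> e \<le> b \<and> \<iota> e = i")
    case False
    then have "walls_within (S - {i}) c b"
      using assms(2,3) wall_in_S b_le_k by (auto simp: walls_within_def)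
    then show ?thesis using shorter[OF \<open>i \<in> S\<close>] by simp
  next
    case True
    define e where "e = (LEAST e. c < e \<and> e \<le> b \<and> \<iota> e = i)"
    have e: "c < e" "e \<le> b" "\<iota> e = i"
      using LeastI_ex[OF True] by (simp_all add: e_def)
    have "\<not> (c < j \<and> j \<le> b \<and> \<iota> j = i)" if "j < e" for j
      using not_less_Least[of j "\<lambda>e. c < e \<and> e \<le> b \<and> \<iota> e = i"] that unfolding e_def .
    then have "walls_within (S - {i}) c (e - 1)"
      using e assms(2) wall_in_S b_le_k by (auto simp: walls_within_def)
    then have "real (e - 1 - c) \<le> L" by (rule shorter[OF \<open>i \<in> S\<close>])
    then have "real (e - c) \<le> L + 1" using e(1) by linarith
    moreover have "radius * sqrt (lam / card S) \<le> \<bar>V c \<bullet> \<alpha> i\<bar>"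
    proof (rule power2_le_imp_le)
      show "(radius * sqrt (lam / card S))\<^sup>2 \<le> \<bar>V c \<bullet> \<alpha> i\<bar>\<^sup>2"
        using large lam_pos by (simp add: power_mult_distrib ac_simps)
    qed simp
    moreover have "\<bar>V c \<bullet> \<alpha> i\<bar> \<le> (\<Sum>j\<in>{c<..e}. kick j)"
      using abs_inner_V_le_sum_kicks[of c e] e b_le_k by simp
    ultimately show ?thesis using e(1,2) by (intro disjI2 exI[of _ e]) auto
  qed
qed

lemma length_le_reflection_bound_step:
  assumes "3 \<le> card S" "a < b"
    and shorter: "\<And>i c e. i \<in> S \<Longrightarrow> walls_within (S - {i}) c e \<Longrightarrow>
      real (e - c) \<le> reflection_bound (card S - 1)"
  shows "real (b - a) \<le> reflection_bound (card S)"
proof -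
  define s where "s = real (card S)"
  define Y where "Y = s / lam"
  define L where "L = reflection_bound (card S - 1)"
  define T where "T = (\<Sum>j\<in>{a<..b}. kick j)"
  define d where "d = radius * sqrt (lam / s)"
  have "0 < s" "2 \<le> L" using assms(1) two_le_reflection_bound[of "card S - 1"] by (auto simp: s_def L_def)
  have "1 \<le> Y" using lam_pos lam_le_one assms(1) by (simp add: Y_def s_def field_simps)
  have "0 < d" using lam_pos radius_pos[OF assms(2)] \<open>0 < s\<close> by (simp add: d_def)
  have "real (b - a) \<le> (L + 1) * T / d + L"
    unfolding T_def
  proof (rule greedy_block_bound[OF _ \<open>0 < d\<close>])
    fix c assume c: "a \<le> c" "c \<le> b"
    have "S \<noteq> {}" using assms(1) by auto
    from short_tail_or_block[OF this c shorter]
    show "real (b - c) \<le> L \<or> (\<exists>e>c. e \<le> b \<and> real (e - c) \<le> L + 1 \<and> d \<le> (\<Sum>j\<in>{c<..e}. kick j))"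
      unfolding d_def s_def L_def .
  qed (use \<open>2 \<le> L\<close> in \<open>auto intro: kick_nonneg\<close>)
  moreover have "T \<le> 2 * Y * d"
  proof (rule power2_le_imp_le)
    have "T\<^sup>2 \<le> 4 * radius\<^sup>2 * s / lam" using sum_kicks_sq_le by (simp add: T_def s_def)
    also have "\<dots> = (2 * Y * d)\<^sup>2"
      using lam_pos \<open>0 < s\<close> by (simp add: Y_def d_def power_mult_distrib power2_eq_square field_simps)
    finally show "T\<^sup>2 \<le> (2 * Y * d)\<^sup>2" .
  qed (use \<open>1 \<le> Y\<close> \<open>0 < d\<close> in simp)
  then have "(L + 1) * T / d \<le> (L + 1) * (2 * Y)"
    using \<open>0 < d\<close> \<open>2 \<le> L\<close> by (simp add: pos_divide_le_eq mult_left_mono)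
  moreover have "(L + 1) * (2 * Y) + L \<le> 4 * Y * L"
  proof -
    have "1 \<le> (2 * Y - 1) * (L - 1)"
      using \<open>1 \<le> Y\<close> \<open>2 \<le> L\<close> mult_mono[of 1 "2 * Y - 1" 1 "L - 1"] by simp
    then show ?thesis by (simp add: algebra_simps)
  qed
  moreover have "4 * Y * L = reflection_bound (card S)"
    using reflection_bound_rec[of "card S"] assms(1) by (simp add: Y_def s_def L_def)
  ultimately show ?thesis by linarith
qed

text \<open>For \<open>card S = 2\<close> the block argument of \<open>short_tail_or_block\<close> would lose an additive 1;
  instead, any two consecutive reflections carry a kick of at least \<open>2 * sqrt lam * radius\<close>.\<close>

lemma length_le_reflection_bound_two:
  assumes "card S = 2" "a < b"
  shows "real (b - a) \<le> reflection_bound 2"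
proof -
  define T where "T = (\<Sum>j\<in>{a<..b}. kick j)"
  define d where "d = 2 * sqrt lam * radius"
  have "0 < d" using lam_pos radius_pos[OF assms(2)] by (simp add: d_def)
  have "real (b - a) \<le> (1 + 1) * T / d + 1"
    unfolding T_def
  proof (rule greedy_block_bound[OF _ \<open>0 < d\<close>])
    fix c assume c: "a \<le> c" "c \<le> b"
    have "d \<le> (\<Sum>j\<in>{c<..Suc (Suc c)}. kick j)" if "Suc (Suc c) \<le> b"
    proof -
      have "{c<..Suc (Suc c)} = {Suc c, Suc (Suc c)}" by auto
      then show ?thesis using two_kicks_lower_bound[OF assms(1) c(1) that] by (simp add: d_def)
    qed
    then show "real (b - c) \<le> 1 \<or>
        (\<exists>e>c. e \<le> b \<and> real (e - c) \<le> 1 + 1 \<and> d \<le> (\<Sum>j\<in>{c<..e}. kick j))"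
      by (cases "b - c \<le> 1") (auto intro!: exI[of _ "Suc (Suc c)"])
  qed (auto intro: kick_nonneg)
  moreover have "T \<le> 3 / (2 * lam) * d"
  proof (rule power2_le_imp_le)
    have "T\<^sup>2 \<le> 8 * radius\<^sup>2 / lam" using sum_kicks_sq_le assms(1) by (simp add: T_def)
    also have "\<dots> \<le> 9 * radius\<^sup>2 / lam"
      using lam_pos by (simp add: divide_right_mono)
    also have "\<dots> = (3 / (2 * lam) * d)\<^sup>2"
      using lam_pos by (simp add: d_def power_mult_distrib power_divide) (simp add: field_simps power2_eq_square)
    finally show "T\<^sup>2 \<le> (3 / (2 * lam) * d)\<^sup>2" .
  qed (use lam_pos \<open>0 < d\<close> in simp)
  then have "2 * T / d \<le> 3 / lam"
    using \<open>0 < d\<close> lam_pos by (simp add: pos_divide_le_eq)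
  ultimately have "real (b - a) \<le> 3 / lam + 1" by simp
  also have "\<dots> \<le> reflection_bound 2"
    using lam_pos lam_le_one by (simp add: reflection_bound_2 field_simps)
  finally show ?thesis .
qed

end

lemma (in reflection_seq) walls_within_length_le:
  "S \<subseteq> {..<n} \<Longrightarrow> walls_within S a b \<Longrightarrow> real (b - a) \<le> reflection_bound (card S)"
proof (induction "card S" arbitrary: S a b rule: less_induct)
  case less
  have "finite S" using less.prems(1) finite_subset by blast
  have ab: "a \<le> b" "b \<le> k" and in_S: "\<And>j. a < j \<Longrightarrow> j \<le> b \<Longrightarrow> \<iota> j \<in> S"
    using less.prems(2) by (auto simp: walls_within_def)
  consider "a = b" | "card S = 1" | "2 \<le> card S" "a < b"
  proof (cases "a = b")
    case False
    then have "a < b" using ab by simp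
    then have "S \<noteq> {}" using in_S[of "Suc a"] by auto
    then have "card S \<noteq> 0" using \<open>finite S\<close> by simp
    then show ?thesis using that \<open>a < b\<close> by (cases "card S = 1") auto
  qed
  then show ?case
  proof cases
    case 1
    then show ?thesis by (simp add: reflection_bound_nonneg)
  next
    case 2
    then obtain i where "S = {i}" by (rule card_1_singletonE)
    then have "real (b - a) \<le> 1" using walls_within_singleton less.prems(2) by fastforce
    then show ?thesis using 2 reflection_bound_1 by metis
  next
    case 3
    obtain z where "\<And>i. i \<in> S \<Longrightarrow> z \<bullet> \<alpha> i = 0" "\<And>c. a \<le> c \<Longrightarrow> c \<le> b \<Longrightarrow> V c - z \<in> span (\<alpha> ` S)"
      using centre_exists[OF less.prems(2)] by blast
    then interpret stretch: reflection_stretch \<alpha> n lam V \<iota> k S a b z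
      by (intro reflection_stretch.intro reflection_stretch_axioms.intro reflection_seq_axioms less.prems)
    have shorter: "real (e - c) \<le> reflection_bound (card S - 1)"
      if "i \<in> S" "walls_within (S - {i}) c e" for i c e
    proof -
      have "card (S - {i}) < card S" using card_Diff1_less[OF \<open>finite S\<close> that(1)] .
      moreover have "S - {i} \<subseteq> {..<n}" using less.prems(1) by blast
      ultimately have "real (e - c) \<le> reflection_bound (card (S - {i}))"
        using less.hyps that(2) by blast
      then show ?thesis using \<open>finite S\<close> that(1) by simp
    qed
    show ?thesis
      using stretch.length_le_reflection_bound_two stretch.length_le_reflection_bound_step[OF _ _ shorter] 3
      by (cases "card S = 2") auto
  qed
qed

section \<open>Billiard trajectories\<close>

lemma inner_neg_if_hits_hyperplane:
  fixes p v a :: "'a::real_inner"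
  assumes "0 < t" and "(p + t *\<^sub>R v) \<bullet> a = 0"
    and "\<And>s. 0 < s \<Longrightarrow> s < t \<Longrightarrow> 0 < (p + s *\<^sub>R v) \<bullet> a"
  shows "v \<bullet> a < 0"
proof -
  have "0 < (p + (t / 2) *\<^sub>R v) \<bullet> a" using assms by simp
  then have "t * (v \<bullet> a) < 0" using assms(2) by (simp add: inner_add_left)
  then show ?thesis using assms(1) by (simp add: mult_less_0_iff)
qed

definition wall_index :: "(nat \<Rightarrow> 'a::euclidean_space) \<Rightarrow> nat \<Rightarrow> 'a \<Rightarrow> nat" where
  "wall_index \<alpha> n y = (THE i. i < n \<and> y \<in> wall \<alpha> n i)"

lemma billiard_traj_reflection_seq:
  assumes "\<forall>i<n. norm (\<alpha> i) = 1" "inj_on \<alpha> {..<n}" "0 < lam" "lam \<le> 1"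
    and "\<And>c. lam * (\<Sum>i<n. (c i)\<^sup>2) \<le> (norm (\<Sum>i<n. c i *\<^sub>R \<alpha> i))\<^sup>2"
    and traj: "billiard_traj \<alpha> n p v k"
  shows "reflection_seq \<alpha> n lam v (\<lambda>j. wall_index \<alpha> n (p j)) k"
proof -
  have segment: "\<forall>j<k. \<exists>t>0. p (Suc j) = p j + t *\<^sub>R v j \<and>
      (\<forall>s. 0 < s \<and> s < t \<longrightarrow> (\<forall>i<n. (p j + s *\<^sub>R v j) \<bullet> \<alpha> i > 0))"
    and unique: "\<forall>j<k. \<exists>!i. i < n \<and> p (Suc j) \<in> wall \<alpha> n i"
    and specular: "\<forall>j<k. \<forall>i<n. p (Suc j) \<in> wall \<alpha> n i \<longrightarrow>
      v (Suc j) = v j - (2 * (v j \<bullet> \<alpha> i)) *\<^sub>R \<alpha> i"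
    using traj unfolding billiard_traj_def by simp_all
  have hit: "wall_index \<alpha> n (p (Suc j)) < n \<and> p (Suc j) \<in> wall \<alpha> n (wall_index \<alpha> n (p (Suc j)))"
    if "j < k" for j
    unfolding wall_index_def by (rule theI'[OF unique[rule_format, OF that]])
  show ?thesis
  proof unfold_locales
    fix j assume "j < k"
    define i where "i = wall_index \<alpha> n (p (Suc j))"
    have i: "i < n" "p (Suc j) \<in> wall \<alpha> n i" using hit[OF \<open>j < k\<close>] by (simp_all add: i_def)
    obtain t where "0 < t" and t: "p (Suc j) = p j + t *\<^sub>R v j"
      and inside: "\<forall>s. 0 < s \<and> s < t \<longrightarrow> (\<forall>i<n. (p j + s *\<^sub>R v j) \<bullet> \<alpha> i > 0)"
      using segment \<open>j < k\<close> by blast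
    show "v j \<bullet> \<alpha> i < 0"
    proof (rule inner_neg_if_hits_hyperplane[OF \<open>0 < t\<close>])
      show "(p j + t *\<^sub>R v j) \<bullet> \<alpha> i = 0" using i(2) t by (simp add: wall_def)
      show "0 < (p j + s *\<^sub>R v j) \<bullet> \<alpha> i" if "0 < s" "s < t" for s
        using inside that i(1) by blast
    qed
    show "v (Suc j) = v j - (2 * (v j \<bullet> \<alpha> i)) *\<^sub>R \<alpha> i"
      using specular \<open>j < k\<close> i by blast
  next
    fix j assume "0 < j" "j \<le> k"
    then show "wall_index \<alpha> n (p j) < n" using hit[of "j - 1"] by simp
  qed (use assms in simp_all)
qed

theorem theorem1:
  fixes \<alpha> :: "nat \<Rightarrow> 'a::euclidean_space" and n :: nat
    and p v :: "nat \<Rightarrow> 'a" and k :: nat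
  assumes "n \<le> DIM('a)"
    and "inj_on \<alpha> {..<n}"
    and "independent (\<alpha> ` {..<n})"
    and "\<forall>i<n. norm (\<alpha> i) = 1"
    and "billiard_traj \<alpha> n p v k"
  shows "real k \<le> fact n * (4 / lambda_min \<alpha> n) ^ (n - 1)"
proof -
  \<comment> \<open>For \<open>n = 0\<close>, \<open>lambda_min\<close> is the junk value \<open>Min {}\<close>, but then the bound does not depend on it.\<close>
  define lam where "lam = (if n = 0 then 1 else lambda_min \<alpha> n)"
  have "0 < lam" "lam \<le> 1"
    using lambda_min_pos[OF assms(1) _ assms(2,3)] lambda_min_le_one[OF assms(1)] assms(4)
    by (auto simp: lam_def)
  moreover have "lam * (\<Sum>i<n. (c i)\<^sup>2) \<le> (norm (\<Sum>i<n. c i *\<^sub>R \<alpha> i))\<^sup>2" for c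
    using lambda_min_rayleigh(2)[OF assms(1)] by (cases "n = 0") (auto simp: lam_def)
  ultimately interpret reflection_seq \<alpha> n lam v "\<lambda>j. wall_index \<alpha> n (p j)" k
    by (rule billiard_traj_reflection_seq[OF assms(4,2) _ _ _ assms(5)])
  have "walls_within {..<n} 0 k" unfolding walls_within_def using wall_lt by auto
  then have "real k \<le> fact n * (4 / lam) ^ (n - 1)"
    using walls_within_length_le[of "{..<n}" 0 k] by (simp add: reflection_bound_def)
  then show ?thesis by (cases "n = 0") (simp_all add: lam_def)
qed

end
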